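(* Let $p(\cdot)\in\mathcal{P}^{\log}(\mathbb{R}^n)$ with $0<p_-\le p_+<\infty$ and $p_\infty=p_-$, and let $s>1/p_-$. If $\omega$ is a weight with $\omega(x)\lesssim(1+|x|)^\gamma$ for some $\gamma\in\mathbb{R}$ and $\omega^{1/s}\in RH_{sp_+}$, then for every cube $Q$, \[ \|\chi_Q\|_{L^{p(\cdot)}_\omega}\approx\begin{cases}\left[\int_Q\omega(x)^{p_-}dx\right]^{1/p_-}, & \text{if } \ell(Q)>1,\\[1ex] \left[\int_Q\omega(x)^{p_-(Q)}dx\right]^{1/p_-(Q)}, & \text{if } \ell(Q)\le1,\end{cases} \] with implicit constants independent of $Q$.
   Context: $\ell(Q)$ is the side length of $Q$; $p_-(Q)=\operatorname{ess\,inf}_{x\in Q}p(x)$, $p_-=p_-(\mathbb{R}^n)$, $p_+=\operatorname{ess\,sup}p$. $p(\cdot)\in\mathcal{P}^{\log}(\mathbb{R}^n)$ means $0<p_-\le p_+<\infty$ and there are $C,C_\infty>0$ and $p_-\le p_\infty\le p_+$ with $|p(x)-p(y)|\le C/(-\log|x-y|)$ for $|x-y|\le1/2$ and $|p(x)-p_\infty|\le C_\infty/\log(e+|x|)$. A weight is a locally integrable $\omega$ with $0<\omega<\infty$ a.e.; $\|f\|_{L^{p(\cdot)}_\omega}:=\|f\omega\|_{L^{p(\cdot)}}$ with $\|g\|_{L^{p(\cdot)}}=\inf\{\lambda>0:\int|g/\lambda|^{p(x)}dx\le1\}$. $\omega\in RH_t$ ($t>1$) means there is $C>0$ with $\left(\frac1{|Q|}\int_Q\omega^t\right)^{1/t}\le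 C\frac1{|Q|}\int_Q\omega$ for every cube $Q$. *)

theory Defs
  imports "HOL-Analysis.Analysis"
begin

definition cube :: "'a::euclidean_space \<Rightarrow> real \<Rightarrow> 'a set" where
  "cube a l = cbox a (a + l *\<^sub>R One)"

definition ess_inf_on :: "('a::euclidean_space \<Rightarrow> real) \<Rightarrow> 'a set \<Rightarrow> real" where
  "ess_inf_on p Q = Sup {c. AE x in lborel. x \<in> Q \<longrightarrow> c \<le> p x}"

definition ess_sup_all :: "('a::euclidean_space \<Rightarrow> real) \<Rightarrow> real" where
  "ess_sup_all p = Inf {c. AE x in lborel. p x \<le> c}"

abbreviation p_minus :: "('a::euclidean_space \<Rightarrow> real) \<Rightarrow> real" where
  "p_minus p \<equiv> ess_inf_on p UNIV"

abbreviation p_plus :: "('a::euclidean_space \<Rightarrow> real) \<Rightarrow> real" where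
  "p_plus p \<equiv> ess_sup_all p"

definition P_log_with :: "('a::euclidean_space \<Rightarrow> real) \<Rightarrow> real \<Rightarrow> bool" where
  "P_log_with p pinf \<longleftrightarrow>
     p \<in> borel_measurable lborel \<and>
     (\<exists>m>0. AE x in lborel. m \<le> p x) \<and> (\<exists>M. AE x in lborel. p x \<le> M) \<and>
     0 < p_minus p \<and> p_minus p \<le> p_plus p \<and>
     p_minus p \<le> pinf \<and> pinf \<le> p_plus p \<and>
     (\<exists>C>0. \<forall>x y. x \<noteq> y \<and> dist x y \<le> 1/2 \<longrightarrow> \<bar>p x - p y\<bar> \<le> C / (- ln (dist x y))) \<and>
     (\<exists>Cinf>0. \<forall>x. \<bar>p x - pinf\<bar> \<le> Cinf / ln (exp 1 + norm x))"

text \<open>Weight: locally integrable, 0 < w < \<infinity> a.e. (w real-valued, hence finite).\<close>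
definition weight :: "('a::euclidean_space \<Rightarrow> real) \<Rightarrow> bool" where
  "weight w \<longleftrightarrow> w \<in> borel_measurable lborel \<and> (AE x in lborel. 0 < w x) \<and>
     (\<forall>K. compact K \<longrightarrow> set_integrable lborel K w)"

definition lp_norm :: "('a::euclidean_space \<Rightarrow> real) \<Rightarrow> ('a \<Rightarrow> real) \<Rightarrow> real" where
  "lp_norm p g = Inf {r::real. r > 0 \<and>
      (\<integral>\<^sup>+ x. ennreal ((\<bar>g x\<bar> / r) powr p x) \<partial>lborel) \<le> 1}"

definition lp_w_norm :: "('a::euclidean_space \<Rightarrow> real) \<Rightarrow> ('a \<Rightarrow> real) \<Rightarrow> ('a \<Rightarrow> real) \<Rightarrow> real" where
  "lp_w_norm p w f = lp_norm p (\<lambda>x. f x * w x)"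

definition RH :: "real \<Rightarrow> ('a::euclidean_space \<Rightarrow> real) \<Rightarrow> bool" where
  "RH t w \<longleftrightarrow> (\<exists>C>0. \<forall>a l. l > 0 \<longrightarrow>
      set_integrable lborel (cube a l) (\<lambda>x. w x powr t) \<and>
      ((\<integral>x\<in>cube a l. w x powr t \<partial>lborel) / measure lborel (cube a l)) powr (1/t)
        \<le> C * ((\<integral>x\<in>cube a l. w x \<partial>lborel) / measure lborel (cube a l)))"

end

theory Submission
  imports Defs "HOL-Probability.Sinc_Integral"
begin

text \<open>
  Let \<open>q\<close> be the exponent of the statement on a cube \<open>Q\<close> and \<open>A = (\<integral>\<^sub>Q w^q)^(1/q)\<close>.
  Both bounds are estimates for the modular \<open>\<rho>(f) = \<integral> |f|^p(x)\<close> of the Luxemburg norm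
  at \<open>f = \<chi>\<^sub>Q w / \<lambda>\<close>.

  Upper bound: on \<open>Q\<close> the exponent lies between \<open>q\<close> and some \<open>P\<close> for which \<open>|Q|^(1 - P/q)\<close> is
  bounded independently of \<open>Q\<close> (by log-Hoelder continuity on small cubes, trivially on the
  others), so that \<open>\<rho>(\<chi>\<^sub>Q w / \<lambda>) \<le> \<lambda>^-q \<integral>\<^sub>Q w^q + \<lambda>^-P \<integral>\<^sub>Q w^P\<close>. The reverse Hoelder
  condition for \<open>w^(1/s)\<close>, framed by two power-mean inequalities (the lower one needs
  \<open>s q \<ge> 1\<close>), bounds the mean of \<open>w^P\<close> by the \<open>P/q\<close>-th power of the mean of \<open>w^q\<close>;
  hence \<open>\<lambda> = c A\<close> makes the modular at most 1.

  Lower bound: \<open>\<rho>(\<chi>\<^sub>Q w / \<lambda>) \<le> 1\<close> forces \<open>\<integral>\<^sub>Q w^q \<le> C \<lambda>^q\<close>. On cubes of side at most 1 this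
  follows from \<open>t^q \<le> t^p(x) + 1\<close>. On larger cubes \<open>q = p\<^sub>- = p\<^sub>\<infinity>\<close>, and the decay
  \<open>|p(x) - p\<^sub>\<infinity>| \<le> C / ln (e + |x|)\<close> yields \<open>t^p\<^sub>- \<le> C' t^p(x) + h(x)\<close>, where \<open>h\<close> is a product
  of Cauchy kernels: integrable, with \<open>- ln h(x) = O(ln (e + |x|))\<close>.
\<close>

section \<open>Essential bounds of the exponent\<close>

lemma AE_Sup_le:
  fixes f :: "'a \<Rightarrow> real"
  assumes "S \<noteq> {}" "bdd_above S" "\<And>c. c \<in> S \<Longrightarrow> AE x in M. P x \<longrightarrow> c \<le> f x"
  shows "AE x in M. P x \<longrightarrow> Sup S \<le> f x"
proof -
  have "AE x in M. P x \<longrightarrow> Sup S - 1 / Suc k \<le> f x" for k :: nat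
  proof -
    obtain c where c: "c \<in> S" "Sup S - 1 / Suc k < c"
      using less_cSup_iff[OF assms(1,2), of "Sup S - 1 / Suc k"] by auto
    from assms(3)[OF c(1)] show ?thesis by (rule eventually_mono) (use c(2) in auto)
  qed
  then have "AE x in M. \<forall>k::nat. P x \<longrightarrow> Sup S - 1 / Suc k \<le> f x"
    unfolding AE_all_countable by blast
  then show ?thesis
  proof (rule eventually_mono, intro impI)
    fix x assume x: "\<forall>k::nat. P x \<longrightarrow> Sup S - 1 / Suc k \<le> f x" "P x"
    show "Sup S \<le> f x"
    proof (rule field_le_epsilon)
      fix e :: real assume "0 < e"
      then obtain k :: nat where "1 / Suc k < e" by (metis nat_approx_posE)
      moreover have "Sup S - 1 / Suc k \<le> f x" using x by blast
      ultimately show "Sup S \<le> f x + e" by linarith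
    qed
  qed
qed

lemma AE_on_nonnull_set_imp:
  assumes "Q \<in> sets M" "emeasure M Q \<noteq> 0" "AE x in M. x \<in> Q \<longrightarrow> P"
  shows P
proof (rule ccontr)
  assume "\<not> P"
  from assms(3) have "AE x in M. x \<notin> Q" by (rule eventually_mono) (use \<open>\<not> P\<close> in blast)
  then have "Q \<in> null_sets M" by (rule AE_iff_null_sets[OF assms(1), THEN iffD2])
  with assms(2) show False by (simp add: null_sets_def)
qed

lemma
  fixes p :: "'a::euclidean_space \<Rightarrow> real"
  assumes Q: "Q \<in> sets lborel" "emeasure lborel Q \<noteq> 0"
    and lower: "AE x in lborel. m \<le> p x" and upper: "AE x in lborel. p x \<le> M"
  shows ess_inf_on_AE_le: "AE x in lborel. x \<in> Q \<longrightarrow> ess_inf_on p Q \<le> p x"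
    and le_ess_inf_on: "(AE x in lborel. x \<in> Q \<longrightarrow> c \<le> p x) \<Longrightarrow> c \<le> ess_inf_on p Q"
proof -
  define S where "S = {c. AE x in lborel. x \<in> Q \<longrightarrow> c \<le> p x}"
  have "c \<le> M" if "c \<in> S" for c
  proof -
    from that upper have "AE x in lborel. x \<in> Q \<longrightarrow> c \<le> M"
      unfolding S_def mem_Collect_eq by eventually_elim auto
    then show ?thesis by (rule AE_on_nonnull_set_imp[OF Q])
  qed
  then have bdd: "bdd_above S" by (rule bdd_aboveI)
  from lower have "m \<in> S" unfolding S_def mem_Collect_eq by (rule eventually_mono) simp
  then have "S \<noteq> {}" by blast
  then show "AE x in lborel. x \<in> Q \<longrightarrow> ess_inf_on p Q \<le> p x"
    unfolding ess_inf_on_def S_def[symmetric] using bdd by (rule AE_Sup_le) (simp add: S_def)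
  show "c \<le> ess_inf_on p Q" if "AE x in lborel. x \<in> Q \<longrightarrow> c \<le> p x"
    unfolding ess_inf_on_def S_def[symmetric] using bdd by (rule cSup_upper[rotated]) (simp add: S_def that)
qed

lemma AE_le_ess_sup_all:
  fixes p :: "'a::euclidean_space \<Rightarrow> real"
  assumes lower: "AE x in lborel. m \<le> p x" and upper: "AE x in lborel. p x \<le> M"
  shows "AE x in lborel. p x \<le> ess_sup_all p"
proof -
  define S where "S = uminus ` {c. AE x in lborel. p x \<le> c}"
  have S_iff: "c \<in> S \<longleftrightarrow> (AE x in lborel. p x \<le> - c)" for c
  proof
    show "c \<in> S \<Longrightarrow> AE x in lborel. p x \<le> - c" unfolding S_def by force
    show "AE x in lborel. p x \<le> - c \<Longrightarrow> c \<in> S" unfolding S_def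
      by (rule image_eqI[of _ _ "- c"]) simp_all
  qed
  from upper have "- M \<in> S" unfolding S_iff by simp
  then have nonempty: "S \<noteq> {}" by blast
  have "c \<le> - m" if "c \<in> S" for c
  proof -
    from lower that[unfolded S_iff] have "AE x in lborel. (x::'a) \<in> UNIV \<longrightarrow> m \<le> - c"
      by eventually_elim simp
    then have "m \<le> - c" by (rule AE_on_nonnull_set_imp[rotated 2]) simp_all
    then show ?thesis by linarith
  qed
  then have "bdd_above S" by (rule bdd_aboveI)
  with nonempty have "AE x in lborel. True \<longrightarrow> Sup S \<le> - p x"
  proof (rule AE_Sup_le)
    show "AE x in lborel. True \<longrightarrow> c \<le> - p x" if "c \<in> S" for c
      using that[unfolded S_iff] by (rule eventually_mono) simp
  qed
  moreover have "ess_sup_all p = - Sup S"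
    unfolding ess_sup_all_def Inf_real_def S_def ..
  ultimately show ?thesis by (simp add: le_minus_iff)
qed

lemma
  fixes p :: "'a::euclidean_space \<Rightarrow> real"
  assumes "P_log_with p pinf"
  shows P_log_with_AE_ge: "AE x in lborel. p_minus p \<le> p x"
    and P_log_with_AE_le: "AE x in lborel. p x \<le> p_plus p"
proof -
  from assms obtain m M where m: "AE x in lborel. m \<le> p x" and M: "AE x in lborel. p x \<le> M"
    unfolding P_log_with_def by blast
  have "AE x in lborel. x \<in> (UNIV :: 'a set) \<longrightarrow> p_minus p \<le> p x"
    by (rule ess_inf_on_AE_le[OF _ _ m M]) auto
  then show "AE x in lborel. p_minus p \<le> p x" by simp
  show "AE x in lborel. p x \<le> p_plus p" by (rule AE_le_ess_sup_all[OF m M])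
qed

section \<open>Cubes and the exponent on a cube\<close>

lemma cube_sets [measurable]: "cube a l \<in> sets lborel"
  unfolding cube_def by simp

lemma emeasure_cube:
  fixes a :: "'a::euclidean_space"
  assumes "0 \<le> l" shows "emeasure lborel (cube a l) = ennreal (l ^ DIM('a))"
  unfolding cube_def using assms
  by (subst emeasure_lborel_cbox) (auto simp: inner_simps prod_constant)

lemma emeasure_cube_nonzero:
  fixes a :: "'a::euclidean_space"
  assumes "0 < l" shows "emeasure lborel (cube a l) \<noteq> 0"
  using assms by (simp add: emeasure_cube)

lemma measure_cube:
  fixes a :: "'a::euclidean_space"
  assumes "0 \<le> l" shows "measure lborel (cube a l) = l ^ DIM('a)"
  using emeasure_cube[OF assms, of a] assms by (simp add: measure_def)

lemma dist_le_in_cube: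
  fixes a :: "'a::euclidean_space" and l :: real
  assumes "x \<in> cube a l" "y \<in> cube a l"
  shows "dist x y \<le> DIM('a) * l"
proof -
  have "\<bar>(x - y) \<bullet> b\<bar> \<le> l" if "b \<in> Basis" for b
  proof -
    have "a \<bullet> b \<le> x \<bullet> b \<and> x \<bullet> b \<le> a \<bullet> b + l" "a \<bullet> b \<le> y \<bullet> b \<and> y \<bullet> b \<le> a \<bullet> b + l"
      using assms that by (auto simp: cube_def mem_box inner_simps)
    then show ?thesis by (auto simp: inner_simps)
  qed
  then have "(\<Sum>b\<in>Basis. \<bar>(x - y) \<bullet> b\<bar>) \<le> (\<Sum>b\<in>(Basis::'a set). l)"
    by (intro sum_mono)
  then show ?thesis
    using norm_le_l1[of "x - y"] by (simp add: dist_norm)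
qed

definition cube_exponent :: "('a::euclidean_space \<Rightarrow> real) \<Rightarrow> 'a \<Rightarrow> real \<Rightarrow> real" where
  "cube_exponent p a l = (if 1 < l then p_minus p else ess_inf_on p (cube a l))"

lemma cube_exponent_bounds:
  fixes p :: "'a::euclidean_space \<Rightarrow> real"
  assumes p: "P_log_with p pinf" and l: "0 < l"
  shows cube_exponent_AE_le: "AE x in lborel. x \<in> cube a l \<longrightarrow> cube_exponent p a l \<le> p x"
    and p_minus_le_cube_exponent: "p_minus p \<le> cube_exponent p a l"
    and cube_exponent_le_p_plus: "cube_exponent p a l \<le> p_plus p"
proof -
  note lower = P_log_with_AE_ge[OF p] and upper = P_log_with_AE_le[OF p]
  note Q = cube_sets emeasure_cube_nonzero[OF l]
  have le: "AE x in lborel. x \<in> cube a l \<longrightarrow> cube_exponent p a l \<le> p x"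
  proof (cases "1 < l")
    case True
    from lower show ?thesis by (rule eventually_mono) (simp add: cube_exponent_def True)
  next
    case False
    then show ?thesis
      using ess_inf_on_AE_le[OF Q lower upper] by (simp add: cube_exponent_def)
  qed
  then show "AE x in lborel. x \<in> cube a l \<longrightarrow> cube_exponent p a l \<le> p x" .
  from lower have "AE x in lborel. x \<in> cube a l \<longrightarrow> p_minus p \<le> p x"
    by (rule eventually_mono) simp
  then show "p_minus p \<le> cube_exponent p a l"
    unfolding cube_exponent_def using le_ess_inf_on[OF Q lower upper] by simp
  from le upper have "AE x in lborel. x \<in> cube a l \<longrightarrow> cube_exponent p a l \<le> p_plus p"
    by eventually_elim auto
  then show "cube_exponent p a l \<le> p_plus p" by (rule AE_on_nonnull_set_imp[OF Q])
qed

lemma log_Hoelder_oscillation_cube: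
  fixes p :: "'a::euclidean_space \<Rightarrow> real" and l :: real
  assumes LH: "\<forall>x y. x \<noteq> y \<and> dist x y \<le> 1/2 \<longrightarrow> \<bar>p x - p y\<bar> \<le> C / - ln (dist x y)"
    and C: "0 \<le> C" and l: "0 < l" "DIM('a) * l \<le> 1/2"
    and xy: "x \<in> cube a l" "y \<in> cube a l"
  shows "\<bar>p x - p y\<bar> \<le> C / - ln (DIM('a) * l)"
proof -
  have ln_pos: "0 < - ln (DIM('a) * l)"
    using l by (simp add: ln_less_zero_iff)
  show ?thesis
  proof (cases "x = y")
    case True
    then show ?thesis using divide_nonneg_pos[OF C ln_pos] by simp
  next
    case False
    have d: "dist x y \<le> DIM('a) * l" by (rule dist_le_in_cube[OF xy])
    then have "- ln (DIM('a) * l) \<le> - ln (dist x y)"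
      using False by (simp add: ln_mono)
    then have "C / - ln (dist x y) \<le> C / - ln (DIM('a) * l)"
      using C ln_pos by (intro divide_left_mono mult_pos_pos) auto
    moreover have "\<bar>p x - p y\<bar> \<le> C / - ln (dist x y)"
      using LH False d l by auto
    ultimately show ?thesis by linarith
  qed
qed

lemma p_le_ess_inf_on_small_cube:
  fixes p :: "'a::euclidean_space \<Rightarrow> real" and l C :: real
  assumes p: "P_log_with p pinf"
    and LH: "\<forall>x y. x \<noteq> y \<and> dist x y \<le> 1/2 \<longrightarrow> \<bar>p x - p y\<bar> \<le> C / - ln (dist x y)"
    and C: "0 \<le> C" and l: "0 < l" "DIM('a) * l \<le> 1/2" and x: "x \<in> cube a l"
  shows "p x \<le> ess_inf_on p (cube a l) + C / - ln (DIM('a) * l)"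
proof -
  have "p x - C / - ln (DIM('a) * l) \<le> p y" if "y \<in> cube a l" for y
    using log_Hoelder_oscillation_cube[OF LH C l x that] by (simp add: abs_le_iff)
  then have "AE y in lborel. y \<in> cube a l \<longrightarrow> p x - C / - ln (DIM('a) * l) \<le> p y"
    by (intro AE_I2) blast
  then have "p x - C / - ln (DIM('a) * l) \<le> ess_inf_on p (cube a l)"
    by (rule le_ess_inf_on[OF cube_sets emeasure_cube_nonzero[OF l(1)]
          P_log_with_AE_ge[OF p] P_log_with_AE_le[OF p]])
  then show ?thesis by simp
qed

lemma small_cube_exponent_gap:
  fixes p :: "'a::euclidean_space \<Rightarrow> real" and l C :: real
  assumes p: "P_log_with p pinf"
    and LH: "\<forall>x y. x \<noteq> y \<and> dist x y \<le> 1/2 \<longrightarrow> \<bar>p x - p y\<bar> \<le> C / - ln (dist x y)"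
    and C: "0 \<le> C" and l: "0 < l" "DIM('a) * l \<le> 1/2"
  shows "\<exists>P. cube_exponent p a l \<le> P \<and> P \<le> p_plus p \<and>
           (AE x in lborel. x \<in> cube a l \<longrightarrow> p x \<le> P) \<and>
           (P - cube_exponent p a l) * - ln l \<le> C * (1 + ln DIM('a) / ln 2)"
proof -
  define n q \<delta> where "n = real DIM('a)" and "q = cube_exponent p a l" and "\<delta> = C / - ln (n * l)"
  have n: "1 \<le> n" by (simp add: n_def DIM_positive Suc_leI)
  have "l \<le> n * l" using n l by (simp add: mult_le_cancel_right1)
  with l(2) have l_half: "l \<le> 1/2" unfolding n_def by linarith
  then have q_eq: "q = ess_inf_on p (cube a l)" by (simp add: q_def cube_exponent_def)
  have ln2: "ln 2 \<le> - ln (n * l)"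
    using l n ln_mono[of "n * l" "1/2"] by (simp add: ln_div n_def)
  have "0 < ln (2::real)" by simp
  with ln2 have ln_pos: "0 < - ln (n * l)" by linarith
  have "0 \<le> \<delta>" unfolding \<delta>_def using C ln_pos by (intro divide_nonneg_pos) auto
  then have gap: "q \<le> min (q + \<delta>) (p_plus p)" "min (q + \<delta>) (p_plus p) - q \<le> \<delta>"
    using cube_exponent_le_p_plus[OF p l(1)] by (auto simp: q_def)
  from P_log_with_AE_le[OF p] have P: "AE x in lborel. x \<in> cube a l \<longrightarrow> p x \<le> min (q + \<delta>) (p_plus p)"
  proof (rule eventually_mono, intro impI)
    fix x assume "p x \<le> p_plus p" and x: "x \<in> cube a l"
    with p_le_ess_inf_on_small_cube[OF p LH C l x] show "p x \<le> min (q + \<delta>) (p_plus p)"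
      by (simp add: q_eq \<delta>_def n_def)
  qed
  have "0 \<le> - ln l" using l_half l by simp
  with gap(2) have "(min (q + \<delta>) (p_plus p) - q) * - ln l \<le> \<delta> * - ln l"
    by (rule mult_right_mono)
  \<comment> \<open>use \<open>- ln l = - ln (n * l) + ln n\<close> and \<open>ln 2 \<le> - ln (n * l)\<close>\<close>
  also have "\<delta> * - ln l = C * (1 + ln n / - ln (n * l))"
    using ln_pos n l by (simp add: \<delta>_def ln_mult field_simps)
  also have "\<dots> \<le> C * (1 + ln n / ln 2)"
    using C n ln2 \<open>0 < ln 2\<close> mult_neg_pos[of "ln (n * l)" "ln 2"] ln_pos
    by (intro mult_left_mono add_left_mono divide_left_mono) auto
  finally show ?thesis
    using P gap(1) unfolding q_def n_def by (intro exI[of _ "min (q + \<delta>) (p_plus p)"]) (simp add: q_def)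
qed

lemma large_cube_exponent_gap:
  fixes p :: "'a::euclidean_space \<Rightarrow> real" and l :: real
  assumes p: "P_log_with p pinf" and l: "0 < l" "1/2 < DIM('a) * l"
  shows "\<exists>P. cube_exponent p a l \<le> P \<and> P \<le> p_plus p \<and>
           (AE x in lborel. x \<in> cube a l \<longrightarrow> p x \<le> P) \<and>
           (P - cube_exponent p a l) * - ln l \<le> (p_plus p - p_minus p) * ln (2 * real DIM('a))"
proof -
  define n q where "n = real DIM('a)" and "q = cube_exponent p a l"
  have n: "1 \<le> n" by (simp add: n_def DIM_positive Suc_leI)
  have q: "p_minus p \<le> q" "q \<le> p_plus p"
    using p_minus_le_cube_exponent[OF p l(1)] cube_exponent_le_p_plus[OF p l(1)] by (simp_all add: q_def)
  have "- ln l \<le> ln (2 * n)"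
    using l n ln_mono[of "1 / (2 * n)" l] by (simp add: ln_div field_simps n_def)
  then have "(p_plus p - q) * - ln l \<le> (p_plus p - q) * ln (2 * n)"
    using q by (intro mult_left_mono) auto
  also have "\<dots> \<le> (p_plus p - p_minus p) * ln (2 * n)"
    using q n by (intro mult_right_mono) auto
  finally have "(p_plus p - q) * - ln l \<le> (p_plus p - p_minus p) * ln (2 * n)" .
  moreover from P_log_with_AE_le[OF p] have "AE x in lborel. x \<in> cube a l \<longrightarrow> p x \<le> p_plus p"
    by (rule eventually_mono) simp
  ultimately show ?thesis using q unfolding q_def n_def by (intro exI[of _ "p_plus p"]) simp
qed

lemma cube_exponent_gap:
  fixes p :: "'a::euclidean_space \<Rightarrow> real"
  assumes p: "P_log_with p pinf"
  obtains D where "0 \<le> D"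
    and "\<And>a l. 0 < l \<Longrightarrow> \<exists>P. cube_exponent p a l \<le> P \<and> P \<le> p_plus p \<and>
          (AE x in lborel. x \<in> cube a l \<longrightarrow> p x \<le> P) \<and> (P - cube_exponent p a l) * - ln l \<le> D"
proof -
  from p obtain C where "0 < C"
    and LH: "\<forall>x y. x \<noteq> y \<and> dist x y \<le> 1/2 \<longrightarrow> \<bar>p x - p y\<bar> \<le> C / - ln (dist x y)"
    unfolding P_log_with_def by blast
  then have C: "0 \<le> C" by simp
  define D where "D = max (C * (1 + ln DIM('a) / ln 2)) ((p_plus p - p_minus p) * ln (2 * real DIM('a)))"
  have "0 \<le> D" using C by (simp add: D_def max.coboundedI1)
  moreover have "\<exists>P. cube_exponent p a l \<le> P \<and> P \<le> p_plus p \<and>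
      (AE x in lborel. x \<in> cube a l \<longrightarrow> p x \<le> P) \<and> (P - cube_exponent p a l) * - ln l \<le> D"
    if l: "0 < l" for a l
  proof (cases "DIM('a) * l \<le> 1/2")
    case True
    then obtain P where P: "cube_exponent p a l \<le> P" "P \<le> p_plus p"
      "AE x in lborel. x \<in> cube a l \<longrightarrow> p x \<le> P"
      "(P - cube_exponent p a l) * - ln l \<le> C * (1 + ln DIM('a) / ln 2)"
      using small_cube_exponent_gap[OF p LH C l] by blast
    have "C * (1 + ln DIM('a) / ln 2) \<le> D" by (simp add: D_def)
    with P show ?thesis by (intro exI[of _ P]) simp
  next
    case False
    then have "1/2 < DIM('a) * l" by linarith
    then obtain P where P: "cube_exponent p a l \<le> P" "P \<le> p_plus p"
      "AE x in lborel. x \<in> cube a l \<longrightarrow> p x \<le> P"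
      "(P - cube_exponent p a l) * - ln l \<le> (p_plus p - p_minus p) * ln (2 * real DIM('a))"
      using large_cube_exponent_gap[OF p l] by blast
    have "(p_plus p - p_minus p) * ln (2 * real DIM('a)) \<le> D" by (simp add: D_def)
    with P show ?thesis by (intro exI[of _ P]) simp
  qed
  ultimately show ?thesis by (rule that)
qed

lemma measure_cube_powr_le:
  fixes a :: "'a::euclidean_space" and l b q P D :: real
  assumes l: "0 < l" and q: "0 < b" "b \<le> q" "q \<le> P" and D: "0 \<le> D" and gap: "(P - q) * - ln l \<le> D"
  shows "measure lborel (cube a l) powr (1 - P / q) \<le> exp (DIM('a) * D / b)"
proof -
  have "measure lborel (cube a l) powr (1 - P / q) = exp (DIM('a) * ((P - q) * - ln l) / q)"
    using l q by (simp add: measure_cube powr_def ln_realpow field_simps)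
  also have "\<dots> \<le> exp (DIM('a) * D / b)"
  proof -
    have "DIM('a) * ((P - q) * - ln l) \<le> DIM('a) * D" using gap by (intro mult_left_mono) auto
    then have "DIM('a) * ((P - q) * - ln l) / q \<le> DIM('a) * D / b" using D q by (intro frac_le) auto
    then show ?thesis by simp
  qed
  finally show ?thesis .
qed

section \<open>Pointwise inequalities for powers\<close>

lemma powr_le_powr_add_powr:
  fixes u q e P :: real
  assumes "0 \<le> u" "q \<le> e" "e \<le> P"
  shows "u powr e \<le> u powr q + u powr P"
proof (cases "u \<le> 1")
  case True
  then have "u powr e \<le> u powr q" using assms by (intro powr_mono') auto
  then show ?thesis by (simp add: add_increasing2)
next
  case False
  then have "u powr e \<le> u powr P" using assms by (intro powr_mono) auto
  then show ?thesis by (simp add: add_increasing)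
qed

lemma powr_le_powr_add_one:
  fixes t q e :: real
  assumes "0 \<le> t" "0 \<le> q" "q \<le> e"
  shows "t powr q \<le> t powr e + 1"
proof (cases "t \<le> 1")
  case True
  then have "t powr q \<le> 1" using assms by (intro powr_le1) auto
  then show ?thesis by (simp add: add_increasing)
next
  case False
  then have "t powr q \<le> t powr e" using assms by (intro powr_mono) auto
  then show ?thesis by simp
qed

lemma powr_le_inverse:
  fixes y B a e :: real
  assumes y: "0 \<le> y" and B: "1 \<le> B" and a: "0 < a" "a \<le> e" and small: "y * B powr (1/a) \<le> 1"
  shows "y powr e \<le> 1 / B"
proof -
  have root: "1 \<le> B powr (1/a)" using B a by (intro ge_one_powr_ge_zero) auto
  then have y_le: "y \<le> 1 / B powr (1/a)" using small by (subst pos_le_divide_eq) auto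
  also have "\<dots> \<le> 1" using root by (subst pos_divide_le_eq) auto
  finally have "y \<le> 1" .
  have "y powr e \<le> y powr a" using y \<open>y \<le> 1\<close> a by (intro powr_mono') auto
  also have "\<dots> \<le> (1 / B powr (1/a)) powr a" using y a y_le by (intro powr_mono2) auto
  also have "\<dots> = 1 / B" using B a by (simp add: powr_divide powr_powr)
  finally show ?thesis .
qed

lemma powr_le_exp_mult_powr_add:
  fixes t h a e k :: real
  assumes t: "0 < t" and h: "0 < h" and a: "0 < a" "a \<le> e" and k: "0 \<le> k"
    and gap: "(e - a) * - ln h \<le> k * a"
  shows "t powr a \<le> exp k * t powr e + h"
proof -
  consider "1 < t" | "t powr a \<le> h" | "t \<le> 1" "h < t powr a" by linarith
  then show ?thesis
  proof cases
    case 1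
    then have "t powr a \<le> t powr e" using a by (intro powr_mono) auto
    also have "\<dots> \<le> exp k * t powr e" using mult_right_mono[of 1 "exp k" "t powr e"] k by simp
    finally show ?thesis using h by linarith
  next
    case 2
    then show ?thesis by (simp add: add_increasing)
  next
    case 3
    have "ln h < a * ln t" using 3 h t by (simp flip: ln_powr)
    then have "- ln t \<le> - ln h / a" using a by (simp add: field_simps)
    moreover have "0 \<le> e - a" using a by simp
    ultimately have "(e - a) * - ln t \<le> (e - a) * (- ln h / a)" by (rule mult_left_mono)
    also have "\<dots> \<le> k" using gap a by (simp add: field_simps)
    finally have "exp ((e - a) * - ln t) \<le> exp k" by simp
    moreover have "t powr a = t powr e * exp ((e - a) * - ln t)"
      using t by (simp add: powr_def exp_add[symmetric] algebra_simps)
    ultimately have "t powr a \<le> t powr e * exp k" by (simp add: mult_left_mono)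
    then show ?thesis using h by (simp add: mult.commute)
  qed
qed

definition cauchy_kernel :: "'a::euclidean_space \<Rightarrow> real" where
  "cauchy_kernel x = (\<Prod>b\<in>Basis. inverse (1 + (x \<bullet> b)\<^sup>2))"

lemma cauchy_kernel_pos: "0 < cauchy_kernel x"
  unfolding cauchy_kernel_def by (intro prod_pos) (auto intro!: add_pos_nonneg)

lemma borel_measurable_cauchy_kernel [measurable]: "cauchy_kernel \<in> borel_measurable borel"
  unfolding cauchy_kernel_def by measurable

lemma nn_integral_cauchy_kernel:
  "(\<integral>\<^sup>+x. ennreal (cauchy_kernel (x::'a::euclidean_space)) \<partial>lborel) = ennreal (pi ^ DIM('a))"
proof -
  let ?f = "\<lambda>t::real. inverse (1 + t\<^sup>2)"
  have "integrable lborel ?f"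
    using integrable_inverse_1_plus_square unfolding set_integrable_def by (simp add: einterval_def)
  moreover have "integral\<^sup>L lborel ?f = pi"
    using LBINT_inverse_1_plus_square
    unfolding interval_lebesgue_integral_def set_lebesgue_integral_def by (simp add: einterval_def)
  ultimately have one: "(\<integral>\<^sup>+t. ennreal (?f t) \<partial>lborel) = ennreal pi"
    by (subst nn_integral_eq_integral) (auto simp: add_pos_nonneg)
  have "ennreal (cauchy_kernel x) = (\<Prod>b\<in>Basis. ennreal (?f (x \<bullet> b)))" for x :: 'a
    unfolding cauchy_kernel_def by (simp add: prod_ennreal add_nonneg_nonneg)
  then have "(\<integral>\<^sup>+x. ennreal (cauchy_kernel (x::'a)) \<partial>lborel)
      = (\<integral>\<^sup>+x. (\<Prod>b\<in>Basis. ennreal (?f ((x::'a) \<bullet> b))) \<partial>lborel)"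
    by presburger
  also have "\<dots> = (\<Prod>b\<in>(Basis::'a set). (\<integral>\<^sup>+t. ennreal (?f t) \<partial>lborel))"
    by (rule nn_integral_lborel_prod) auto
  also have "\<dots> = ennreal (pi ^ DIM('a))"
    by (simp add: one prod_ennreal ennreal_power)
  finally show ?thesis .
qed

lemma minus_ln_cauchy_kernel_le:
  "- ln (cauchy_kernel (x::'a::euclidean_space)) \<le> 2 * DIM('a) * ln (exp 1 + norm x)"
proof -
  have pos: "0 < 1 + (x \<bullet> b)\<^sup>2" for b by (simp add: add_pos_nonneg)
  have "ln (cauchy_kernel x) = (\<Sum>b\<in>Basis. ln (inverse (1 + (x \<bullet> b)\<^sup>2)))"
    unfolding cauchy_kernel_def by (rule ln_prod) (auto simp: pos[THEN less_imp_neq, symmetric])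
  then have "- ln (cauchy_kernel x) = (\<Sum>b\<in>Basis. ln (1 + (x \<bullet> b)\<^sup>2))"
    using pos by (simp add: ln_inverse sum_negf)
  also have "\<dots> \<le> (\<Sum>b\<in>(Basis::'a set). 2 * ln (exp 1 + norm x))"
  proof (rule sum_mono)
    fix b :: 'a assume "b \<in> Basis"
    then have "(x \<bullet> b)\<^sup>2 \<le> (norm x)\<^sup>2"
      by (metis Basis_le_norm abs_le_square_iff abs_norm_cancel)
    moreover have "1 + (norm x)\<^sup>2 \<le> (exp 1 + norm x)\<^sup>2"
    proof -
      have "1 \<le> (exp (1::real))\<^sup>2" by (simp add: one_le_power)
      moreover have "0 \<le> 2 * exp 1 * norm x" by simp
      ultimately show ?thesis unfolding power2_sum by linarith
    qed
    ultimately have "ln (1 + (x \<bullet> b)\<^sup>2) \<le> ln ((exp 1 + norm x)\<^sup>2)"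
      by (intro ln_mono) (auto intro!: add_pos_nonneg)
    then show "ln (1 + (x \<bullet> b)\<^sup>2) \<le> 2 * ln (exp 1 + norm x)"
      by (simp add: ln_realpow add_pos_nonneg)
  qed
  finally show ?thesis by simp
qed

lemma powr_p_minus_le_decay:
  fixes x :: "'a::euclidean_space" and t a e Ci :: real
  assumes t: "0 < t" and a: "0 < a" "a \<le> e" and Ci: "0 \<le> Ci"
    and decay: "e - a \<le> Ci / ln (exp 1 + norm x)"
  shows "t powr a \<le> exp (2 * DIM('a) * Ci / a) * t powr e + cauchy_kernel x"
proof (rule powr_le_exp_mult_powr_add[OF t cauchy_kernel_pos a])
  define L where "L = ln (exp 1 + norm x)"
  have L: "1 \<le> L" unfolding L_def using ln_mono[of "exp 1" "exp 1 + norm x"] by simp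
  have "(e - a) * - ln (cauchy_kernel x) \<le> (e - a) * (2 * DIM('a) * L)"
    using a minus_ln_cauchy_kernel_le[of x] by (intro mult_left_mono) (auto simp: L_def)
  also have "\<dots> \<le> Ci / L * (2 * DIM('a) * L)"
    using decay L by (intro mult_right_mono) (auto simp: L_def)
  also have "\<dots> = 2 * DIM('a) * Ci / a * a" using L a by simp
  finally show "(e - a) * - ln (cauchy_kernel x) \<le> 2 * DIM('a) * Ci / a * a" .
  show "0 \<le> 2 * DIM('a) * Ci / a" using Ci a by simp
qed

section \<open>Power means and reverse Hoelder classes\<close>

lemma set_integrable_powr_mono:
  fixes f :: "'a \<Rightarrow> real"
  assumes Q: "Q \<in> sets M" "emeasure M Q < \<infinity>"
    and f: "f \<in> borel_measurable M" "\<And>x. 0 \<le> f x"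
    and ab: "0 < a" "a \<le> b"
    and int: "set_integrable M Q (\<lambda>x. f x powr b)"
  shows "set_integrable M Q (\<lambda>x. f x powr a)"
proof (rule set_integrable_bound)
  show "set_integrable M Q (\<lambda>x. 1 + f x powr b)"
    using Q int by (intro set_integral_add) (auto simp: set_integrable_def)
  show "set_borel_measurable M Q (\<lambda>x. f x powr a)"
    using Q f unfolding set_borel_measurable_def by measurable
  show "AE x in M. x \<in> Q \<longrightarrow> norm (f x powr a) \<le> norm (1 + f x powr b)"
  proof (intro AE_I2 impI)
    fix x
    have "f x powr a \<le> 1 + f x powr b"
      using powr_le_powr_add_powr[of "f x" 0 a b] f(2)[of x] ab
      by (cases "f x = 0") (auto simp: powr_zero_eq_one)
    then show "norm (f x powr a) \<le> norm (1 + f x powr b)" by simp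
  qed
qed

lemma Youngs_inequality_powr_bound:
  fixes y I \<mu> \<theta> :: real
  assumes "0 \<le> y" "0 < I" "0 < \<mu>" "0 < \<theta>" "\<theta> \<le> 1"
  shows "y powr \<theta> * (I powr - \<theta> * \<mu> powr (\<theta> - 1)) \<le> \<theta> / I * y + (1 - \<theta>) / \<mu>"
proof (cases "y = 0")
  case False
  then have "(y / I) powr \<theta> * (1 / \<mu>) powr (1 - \<theta>) \<le> \<theta> * (y / I) + (1 - \<theta>) * (1 / \<mu>)"
    using assms by (intro Youngs_inequality_0) auto
  moreover have "(y / I) powr \<theta> = y powr \<theta> * I powr - \<theta>"
    using assms powr_divide[of y I \<theta>] by (simp add: powr_minus_divide)
  moreover have "(1 / \<mu>) powr (1 - \<theta>) = \<mu> powr (\<theta> - 1)"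
    using assms by (simp add: powr_divide powr_minus_divide[symmetric])
  ultimately show ?thesis by (simp add: mult.assoc)
qed (use assms in simp)

lemma set_integral_powr_mean_le:
  fixes f :: "'a \<Rightarrow> real"
  assumes Q: "Q \<in> sets M" "emeasure M Q < \<infinity>" "0 < measure M Q"
    and f: "f \<in> borel_measurable M" "\<And>x. 0 \<le> f x"
    and ab: "0 < a" "a \<le> b"
    and int: "set_integrable M Q (\<lambda>x. f x powr b)"
  shows "(\<integral>x\<in>Q. f x powr a \<partial>M) / measure M Q
          \<le> ((\<integral>x\<in>Q. f x powr b \<partial>M) / measure M Q) powr (a / b)"
proof -
  define \<mu> I \<theta> where "\<mu> = measure M Q" and "I = (\<integral>x\<in>Q. f x powr b \<partial>M)" and "\<theta> = a / b"
  have \<theta>: "0 < \<theta>" "\<theta> \<le> 1" and \<mu>: "0 < \<mu>" using ab Q by (auto simp: \<theta>_def \<mu>_def)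
  have inta: "set_integrable M Q (\<lambda>x. f x powr a)"
    using set_integrable_powr_mono[OF Q(1,2) f ab int] .
  have intc: "set_integrable M Q (\<lambda>_. c)" for c :: real
    using Q by (simp add: set_integrable_def)
  have fa: "f x powr a = (f x powr b) powr \<theta>" for x
    using ab by (simp add: powr_powr \<theta>_def)
  have "0 \<le> I" unfolding I_def set_lebesgue_integral_def by (intro integral_nonneg_AE AE_I2) auto
  show ?thesis
  proof (cases "I = 0")
    case True
    have "AE x in M. indicator Q x *\<^sub>R f x powr b = 0"
      using True int unfolding I_def set_lebesgue_integral_def set_integrable_def
      by (subst integral_nonneg_eq_0_iff_AE[symmetric]) auto
    then have "AE x in M. indicator Q x *\<^sub>R f x powr a = 0"
      by eventually_elim (auto simp: indicator_def split: if_splits)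
    then have "(\<integral>x\<in>Q. f x powr a \<partial>M) = 0"
      unfolding set_lebesgue_integral_def by (rule integral_eq_zero_AE)
    then show ?thesis by simp
  next
    case False
    with \<open>0 \<le> I\<close> have I: "0 < I" by simp
    define K where "K = I powr - \<theta> * \<mu> powr (\<theta> - 1)"
    have "(\<integral>x\<in>Q. f x powr a * K \<partial>M) \<le> (\<integral>x\<in>Q. \<theta> / I * f x powr b + (1 - \<theta>) / \<mu> \<partial>M)"
      unfolding fa K_def using inta int intc I \<mu> \<theta>
      by (intro set_integral_mono Youngs_inequality_powr_bound)
         (auto simp: fa[symmetric] intro!: set_integral_add)
    also have "\<dots> = 1"
      using int intc I \<mu> Q
      by (subst set_integral_add) (auto simp: I_def \<mu>_def set_integral_const field_simps)
    finally have "(\<integral>x\<in>Q. f x powr a \<partial>M) \<le> 1 / K"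
      using I \<mu> by (simp add: K_def field_simps)
    also have "1 / K = \<mu> * (I / \<mu>) powr \<theta>"
      using I \<mu> by (simp add: K_def powr_minus powr_diff powr_divide field_simps)
    finally show ?thesis using \<mu> by (simp add: \<mu>_def I_def \<theta>_def field_simps)
  qed
qed

lemma reverse_Hoelder_mean_comparison:
  fixes w :: "'a \<Rightarrow> real"
  assumes Q: "Q \<in> sets M" "emeasure M Q < \<infinity>" "0 < measure M Q"
    and w: "w \<in> borel_measurable M" and s: "0 < s"
    and int: "set_integrable M Q (\<lambda>x. (w x powr (1/s)) powr (s * t))"
    and RH: "((\<integral>x\<in>Q. (w x powr (1/s)) powr (s * t) \<partial>M) / measure M Q) powr (1 / (s * t))
        \<le> C * ((\<integral>x\<in>Q. w x powr (1/s) \<partial>M) / measure M Q)"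
    and C: "0 \<le> C" and q: "1 \<le> s * q" and P: "q \<le> P" "P \<le> t"
  shows "(\<integral>x\<in>Q. w x powr P \<partial>M) / measure M Q
          \<le> C powr (s * P) * ((\<integral>x\<in>Q. w x powr q \<partial>M) / measure M Q) powr (P / q)"
proof -
  define v where "v = (\<lambda>x. w x powr (1/s))"
  define avg where "avg f = (\<integral>x\<in>Q. f x \<partial>M) / measure M Q" for f
  have v: "v \<in> borel_measurable M" "\<And>x. 0 \<le> v x"
    unfolding v_def using w by measurable
  have v_powr: "v x powr (s * e) = w x powr e" for x e
    using s by (simp add: v_def powr_powr)
  have q0: "0 < q" using zero_less_mult_pos[of s q] q s by linarith
  have sP: "0 < s * P" "s * P \<le> s * t" using s q0 P by auto
  have avg_nonneg: "0 \<le> avg (\<lambda>x. v x powr e)" for e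
    unfolding avg_def set_lebesgue_integral_def using Q(3)
    by (intro divide_nonneg_pos integral_nonneg_AE AE_I2) auto
  have int_t: "set_integrable M Q (\<lambda>x. v x powr (s * t))" using int by (simp add: v_def)
  have "avg (\<lambda>x. w x powr P) = avg (\<lambda>x. v x powr (s * P))" by (simp add: v_powr)
  also have "\<dots> \<le> avg (\<lambda>x. v x powr (s * t)) powr (s * P / (s * t))"
    unfolding avg_def by (rule set_integral_powr_mean_le[OF Q v sP int_t])
  also have "\<dots> = (avg (\<lambda>x. v x powr (s * t)) powr (1 / (s * t))) powr (s * P)"
    by (simp add: powr_powr)
  also have "\<dots> \<le> (C * avg v) powr (s * P)"
    using RH sP(1) avg_nonneg[of "s * t"] unfolding avg_def v_def
    by (intro powr_mono2) simp_all
  also have "\<dots> \<le> (C * avg (\<lambda>x. w x powr q) powr (1 / (s * q))) powr (s * P)"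
  proof -
    have "set_integrable M Q (\<lambda>x. v x powr (s * q))"
      using set_integrable_powr_mono[OF Q(1,2) v _ _ int_t] s q0 P by simp
    then have "avg (\<lambda>x. v x powr 1) \<le> avg (\<lambda>x. v x powr (s * q)) powr (1 / (s * q))"
      unfolding avg_def using q by (intro set_integral_powr_mean_le[OF Q v]) auto
    then have "avg v \<le> avg (\<lambda>x. w x powr q) powr (1 / (s * q))"
      using v(2) by (simp add: v_powr)
    moreover have "0 \<le> avg v" using avg_nonneg[of 1] v(2) by simp
    ultimately show ?thesis using C sP(1) by (intro powr_mono2 mult_left_mono) simp_all
  qed
  also have "\<dots> = C powr (s * P) * avg (\<lambda>x. w x powr q) powr (P / q)"
  proof -
    have "0 \<le> avg (\<lambda>x. w x powr q)" using avg_nonneg[of "s * q"] by (simp add: v_powr)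
    then show ?thesis using C s q0 by (simp add: powr_mult powr_powr)
  qed
  finally show ?thesis by (simp add: avg_def)
qed

lemma RH_set_integrable_powr:
  fixes w :: "'a::euclidean_space \<Rightarrow> real"
  assumes RH: "RH (s * t) (\<lambda>x. w x powr (1/s))" and w: "w \<in> borel_measurable lborel"
    and s: "0 < s" and l: "0 < l" and e: "0 < e" "e \<le> t"
  shows "set_integrable lborel (cube a l) (\<lambda>x. w x powr e)"
proof -
  from RH obtain C where "\<forall>a l. 0 < l \<longrightarrow> set_integrable lborel (cube a l) (\<lambda>x. (w x powr (1/s)) powr (s * t)) \<and>
      ((\<integral>x\<in>cube a l. (w x powr (1/s)) powr (s * t) \<partial>lborel) / measure lborel (cube a l)) powr (1 / (s * t))
        \<le> C * ((\<integral>x\<in>cube a l. w x powr (1/s) \<partial>lborel) / measure lborel (cube a l))"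
    unfolding RH_def by blast
  then have "set_integrable lborel (cube a l) (\<lambda>x. (w x powr (1/s)) powr (s * t))"
    using l by blast
  then have "set_integrable lborel (cube a l) (\<lambda>x. (w x powr (1/s)) powr (s * e))"
    by (rule set_integrable_powr_mono[OF cube_sets, rotated 5]) (use w s e l in \<open>auto simp: emeasure_cube\<close>)
  then show ?thesis using s by (simp add: powr_powr)
qed

lemma set_integral_powr_pos:
  fixes w :: "'a \<Rightarrow> real"
  assumes Q: "Q \<in> sets M" "emeasure M Q \<noteq> 0" and w: "AE x in M. 0 < w x"
    and int: "set_integrable M Q (\<lambda>x. w x powr q)"
  shows "0 < (\<integral>x\<in>Q. w x powr q \<partial>M)"
proof -
  have "0 \<le> (\<integral>x\<in>Q. w x powr q \<partial>M)"
    unfolding set_lebesgue_integral_def by (intro integral_nonneg_AE AE_I2) auto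
  moreover have "(\<integral>x\<in>Q. w x powr q \<partial>M) \<noteq> 0"
  proof
    assume "(\<integral>x\<in>Q. w x powr q \<partial>M) = 0"
    then have "AE x in M. indicator Q x *\<^sub>R w x powr q = 0"
      using int unfolding set_lebesgue_integral_def set_integrable_def
      by (subst integral_nonneg_eq_0_iff_AE[symmetric]) auto
    with w have "AE x in M. x \<in> Q \<longrightarrow> False"
      by eventually_elim (auto simp: indicator_def)
    then show False by (rule AE_on_nonnull_set_imp[OF Q])
  qed
  ultimately show ?thesis by simp
qed

section \<open>The modular of the Luxemburg norm\<close>

definition modular :: "('a::euclidean_space \<Rightarrow> real) \<Rightarrow> ('a \<Rightarrow> real) \<Rightarrow> ennreal" where
  "modular p g = (\<integral>\<^sup>+x. ennreal (\<bar>g x\<bar> powr p x) \<partial>lborel)"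

lemma lp_norm_eq_Inf_modular:
  "lp_norm p g = Inf {r. 0 < r \<and> modular p (\<lambda>x. g x / r) \<le> 1}"
  unfolding lp_norm_def
proof (intro arg_cong[where f = Inf] Collect_cong conj_cong refl)
  fix r :: real assume "0 < r"
  then have "(\<integral>\<^sup>+x. ennreal ((\<bar>g x\<bar> / r) powr p x) \<partial>lborel) = modular p (\<lambda>x. g x / r)"
    unfolding modular_def by (simp add: abs_divide)
  then show "((\<integral>\<^sup>+x. ennreal ((\<bar>g x\<bar> / r) powr p x) \<partial>lborel) \<le> 1) = (modular p (\<lambda>x. g x / r) \<le> 1)"
    by (rule arg_cong)
qed

lemma lp_norm_le:
  assumes "0 < r" "modular p (\<lambda>x. g x / r) \<le> 1"
  shows "lp_norm p g \<le> r"
  unfolding lp_norm_eq_Inf_modular using assms by (intro cInf_lower bdd_belowI[of _ 0]) auto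

lemma le_lp_norm:
  assumes "0 < r" "modular p (\<lambda>x. g x / r) \<le> 1"
    and "\<And>r. 0 < r \<Longrightarrow> modular p (\<lambda>x. g x / r) \<le> 1 \<Longrightarrow> c \<le> r"
  shows "c \<le> lp_norm p g"
  unfolding lp_norm_eq_Inf_modular using assms by (intro cInf_greatest) auto

lemma modular_indicator_le:
  fixes w p :: "'a::euclidean_space \<Rightarrow> real"
  assumes Q: "Q \<in> sets lborel" and r: "0 < r"
    and bounds: "AE x in lborel. x \<in> Q \<longrightarrow> 0 \<le> w x \<and> q \<le> p x \<and> p x \<le> P"
    and int_q: "set_integrable lborel Q (\<lambda>x. w x powr q)"
    and int_P: "set_integrable lborel Q (\<lambda>x. w x powr P)"
  shows "modular p (\<lambda>x. indicator Q x * w x / r)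
          \<le> ennreal ((\<integral>x\<in>Q. w x powr q \<partial>lborel) / r powr q + (\<integral>x\<in>Q. w x powr P \<partial>lborel) / r powr P)"
proof -
  define g where "g x = indicator Q x * (w x powr q / r powr q + w x powr P / r powr P)" for x
  have int_g: "integrable lborel g"
    using int_q int_P unfolding g_def set_integrable_def
    by (simp add: distrib_left add_divide_distrib[symmetric] integrable_divide)
  have "modular p (\<lambda>x. indicator Q x * w x / r) \<le> (\<integral>\<^sup>+x. ennreal (g x) \<partial>lborel)"
    unfolding modular_def
  proof (rule nn_integral_mono_AE)
    show "AE x in lborel. ennreal (\<bar>indicator Q x * w x / r\<bar> powr p x) \<le> ennreal (g x)"
      using bounds
    proof eventually_elim
      case (elim x)
      show ?case
      proof (cases "x \<in> Q")
        case True
        with elim have "(w x / r) powr p x \<le> (w x / r) powr q + (w x / r) powr P"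
          using r by (intro powr_le_powr_add_powr) auto
        with True elim r have "\<bar>indicator Q x * w x / r\<bar> powr p x \<le> g x"
          by (simp add: g_def powr_divide)
        then show ?thesis by (rule ennreal_leI)
      qed (simp add: g_def)
    qed
  qed
  also have "\<dots> = ennreal (integral\<^sup>L lborel g)"
    by (rule nn_integral_eq_integral[OF int_g]) (auto simp: g_def)
  also have "integral\<^sup>L lborel g
      = (\<integral>x\<in>Q. w x powr q \<partial>lborel) / r powr q + (\<integral>x\<in>Q. w x powr P \<partial>lborel) / r powr P"
    using int_q int_P unfolding g_def set_lebesgue_integral_def set_integrable_def
    by (simp add: distrib_left)
  finally show ?thesis .
qed

lemma set_integral_powr_le_of_modular:
  fixes w p g :: "'a::euclidean_space \<Rightarrow> real"
  assumes Q[measurable]: "Q \<in> sets lborel"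
    and [measurable]: "w \<in> borel_measurable lborel" "p \<in> borel_measurable lborel" "g \<in> borel_measurable lborel"
    and g: "\<And>x. 0 \<le> g x" and E: "0 \<le> E" and r: "0 < r"
    and pointwise: "AE x in lborel. x \<in> Q \<longrightarrow> w x powr q \<le> r powr q * (E * (\<bar>w x\<bar> / r) powr p x + g x)"
    and G0: "0 \<le> G" and G: "(\<integral>\<^sup>+x\<in>Q. ennreal (g x) \<partial>lborel) \<le> ennreal G"
    and modular: "modular p (\<lambda>x. indicator Q x * w x / r) \<le> 1"
  shows "(\<integral>x\<in>Q. w x powr q \<partial>lborel) \<le> r powr q * (E + G)"
proof -
  define \<rho> where "\<rho> x = ennreal (\<bar>indicator Q x * w x / r\<bar> powr p x)" for x
  have split: "ennreal (r powr q * (E * a + b)) = ennreal (r powr q) * (ennreal E * ennreal a + ennreal b)"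
    if "0 \<le> a" "0 \<le> b" for a b
    using that E by (simp add: ennreal_mult)
  have "(\<integral>\<^sup>+x. ennreal (indicator Q x * w x powr q) \<partial>lborel)
      \<le> (\<integral>\<^sup>+x. ennreal (r powr q) * (ennreal E * \<rho> x + ennreal (g x) * indicator Q x) \<partial>lborel)"
  proof (rule nn_integral_mono_AE)
    show "AE x in lborel. ennreal (indicator Q x * w x powr q)
        \<le> ennreal (r powr q) * (ennreal E * \<rho> x + ennreal (g x) * indicator Q x)"
      using pointwise
    proof eventually_elim
      case (elim x)
      show ?case
      proof (cases "x \<in> Q")
        case True
        with elim have "ennreal (w x powr q) \<le> ennreal (r powr q * (E * (\<bar>w x\<bar> / r) powr p x + g x))"
          by (intro ennreal_leI) simp
        also have "\<dots> = ennreal (r powr q) * (ennreal E * \<rho> x + ennreal (g x) * indicator Q x)"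
          using True g[of x] r by (subst split) (simp_all add: \<rho>_def)
        finally show ?thesis using True by simp
      qed (simp add: \<rho>_def)
    qed
  qed
  also have "\<dots> = ennreal (r powr q) * (ennreal E * modular p (\<lambda>x. indicator Q x * w x / r)
      + (\<integral>\<^sup>+x\<in>Q. ennreal (g x) \<partial>lborel))"
    unfolding modular_def \<rho>_def
    by (subst nn_integral_cmult) (auto simp: nn_integral_add nn_integral_cmult)
  also have "\<dots> \<le> ennreal (r powr q) * (ennreal E * 1 + ennreal G)"
    using modular G by (intro mult_left_mono add_mono) auto
  also have "\<dots> = ennreal (r powr q * (E + G))"
    using split[of 1 G] G0 by simp
  finally have "enn2real (\<integral>\<^sup>+x. ennreal (indicator Q x * w x powr q) \<partial>lborel) \<le> r powr q * (E + G)"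
    using E G0 by (intro enn2real_leI) auto
  moreover have "(\<integral>x\<in>Q. w x powr q \<partial>lborel) = enn2real (\<integral>\<^sup>+x. ennreal (indicator Q x * w x powr q) \<partial>lborel)"
    unfolding set_lebesgue_integral_def by (simp add: integral_eq_nn_integral)
  ultimately show ?thesis by simp
qed

section \<open>Estimates on cubes\<close>

definition cube_weight_norm :: "('a::euclidean_space \<Rightarrow> real) \<Rightarrow> ('a \<Rightarrow> real) \<Rightarrow> 'a \<Rightarrow> real \<Rightarrow> real" where
  "cube_weight_norm p w a l =
     (\<integral>x\<in>cube a l. w x powr cube_exponent p a l \<partial>lborel) powr (1 / cube_exponent p a l)"

lemma unscaled_mean_comparison:
  fixes IP Iq \<mu> R P q :: real
  assumes "0 < \<mu>" "0 < Iq" "0 < q" and "IP / \<mu> \<le> R powr P * (Iq / \<mu>) powr (P / q)"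
  shows "IP \<le> R powr P * \<mu> powr (1 - P / q) * (Iq powr (1/q)) powr P"
proof -
  have "IP \<le> \<mu> * (R powr P * (Iq / \<mu>) powr (P / q))"
    using assms by (simp add: pos_divide_le_eq mult.commute)
  also have "(Iq / \<mu>) powr (P / q) = (Iq powr (1/q)) powr P / \<mu> powr (P / q)"
    using assms by (simp add: powr_divide powr_powr)
  also have "\<mu> * (R powr P * ((Iq powr (1/q)) powr P / \<mu> powr (P / q)))
      = R powr P * \<mu> powr (1 - P / q) * (Iq powr (1/q)) powr P"
    using assms by (simp add: powr_diff)
  finally show ?thesis .
qed

lemma modular_le_one_of_mean_comparison:
  fixes w p :: "'a::euclidean_space \<Rightarrow> real"
  assumes Q: "Q \<in> sets lborel" "0 < measure lborel Q"
    and bounds: "AE x in lborel. x \<in> Q \<longrightarrow> 0 \<le> w x \<and> q \<le> p x \<and> p x \<le> P"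
    and q: "0 < b" "b \<le> q" "q \<le> P"
    and int_q: "set_integrable lborel Q (\<lambda>x. w x powr q)"
    and int_P: "set_integrable lborel Q (\<lambda>x. w x powr P)"
    and Iq: "0 < (\<integral>x\<in>Q. w x powr q \<partial>lborel)"
    and R: "0 \<le> R"
    and comparison: "(\<integral>x\<in>Q. w x powr P \<partial>lborel) / measure lborel Q
        \<le> R powr P * ((\<integral>x\<in>Q. w x powr q \<partial>lborel) / measure lborel Q) powr (P / q)"
    and K: "1 \<le> K" "measure lborel Q powr (1 - P / q) \<le> K"
    and c: "max 1 R * (2 * K) powr (1 / b) \<le> c"
  shows "modular p (\<lambda>x. indicator Q x * w x / (c * (\<integral>x\<in>Q. w x powr q \<partial>lborel) powr (1/q))) \<le> 1"
proof -
  define \<mu> Iq IP A where "\<mu> = measure lborel Q" and "Iq = (\<integral>x\<in>Q. w x powr q \<partial>lborel)"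
    and "IP = (\<integral>x\<in>Q. w x powr P \<partial>lborel)" and "A = Iq powr (1/q)"
  have \<mu>: "0 < \<mu>" and Iq0: "0 < Iq" and A: "0 < A" using Q Iq by (simp_all add: \<mu>_def Iq_def A_def)
  have q0: "0 < q" using q by linarith
  \<comment> \<open>\<open>c\<close> makes each of the two terms of \<open>modular_indicator_le\<close> at most \<open>1/2\<close>\<close>
  define X where "X = (2 * K) powr (1 / b)"
  have X: "1 \<le> X" using K q by (simp add: X_def ge_one_powr_ge_zero)
  have "1 * X \<le> max 1 R * X" "R * X \<le> max 1 R * X" using X by (intro mult_right_mono; simp)+
  with c have X_c: "X \<le> c" "R * X \<le> c" unfolding X_def by simp_all
  with X have c0: "0 < c" by linarith
  have half: "1 / (2 * K) \<le> 1 / 2" using K by (intro divide_left_mono) auto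
  have "(1 / c) powr q \<le> 1 / (2 * K)"
    using K q c0 X_c by (intro powr_le_inverse) (auto simp: X_def field_simps)
  moreover have "Iq / (c * A) powr q = (1 / c) powr q"
    using c0 Iq0 q0 by (simp add: A_def powr_mult powr_powr powr_divide)
  ultimately have term_q: "Iq / (c * A) powr q \<le> 1 / 2" using half by linarith
  have small_P: "(R / c) powr P \<le> 1 / (2 * K)"
    using K q c0 X_c R by (intro powr_le_inverse) (auto simp: X_def field_simps)
  have "IP \<le> R powr P * \<mu> powr (1 - P / q) * A powr P"
    unfolding A_def using \<mu> Iq0 q0 comparison
    by (intro unscaled_mean_comparison) (simp_all add: IP_def Iq_def \<mu>_def)
  then have "IP / (c * A) powr P \<le> R powr P * \<mu> powr (1 - P / q) * A powr P / (c * A) powr P"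
    using c0 A by (intro divide_right_mono) auto
  also have "\<dots> = (R / c) powr P * \<mu> powr (1 - P / q)"
    using c0 A R by (simp add: powr_mult powr_divide)
  also have "\<dots> \<le> 1 / (2 * K) * K"
    using small_P K by (intro mult_mono) (auto simp: \<mu>_def)
  finally have term_P: "IP / (c * A) powr P \<le> 1 / 2" using K by simp
  have "modular p (\<lambda>x. indicator Q x * w x / (c * A)) \<le> ennreal (Iq / (c * A) powr q + IP / (c * A) powr P)"
    unfolding Iq_def IP_def using c0 A by (intro modular_indicator_le[OF Q(1) _ bounds int_q int_P]) simp
  also have "\<dots> \<le> 1"
  proof -
    have "Iq / (c * A) powr q + IP / (c * A) powr P \<le> 1" using term_q term_P by linarith
    then show ?thesis using ennreal_leI by fastforce
  qed
  finally show ?thesis by (simp add: A_def Iq_def)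
qed

lemma modular_cube_le_one:
  fixes p w :: "'a::euclidean_space \<Rightarrow> real" and s C K c l P :: real
  assumes p: "P_log_with p pinf" and s: "1 \<le> s * p_minus p"
    and w: "w \<in> borel_measurable lborel" "AE x in lborel. 0 < w x"
    and RH: "RH (s * p_plus p) (\<lambda>x. w x powr (1/s))" and l: "0 < l"
    and RH_cube: "((\<integral>x\<in>cube a l. (w x powr (1/s)) powr (s * p_plus p) \<partial>lborel) / measure lborel (cube a l))
          powr (1 / (s * p_plus p)) \<le> C * ((\<integral>x\<in>cube a l. w x powr (1/s) \<partial>lborel) / measure lborel (cube a l))"
    and C: "0 \<le> C"
    and P: "cube_exponent p a l \<le> P" "P \<le> p_plus p" "AE x in lborel. x \<in> cube a l \<longrightarrow> p x \<le> P"
    and K: "1 \<le> K" "measure lborel (cube a l) powr (1 - P / cube_exponent p a l) \<le> K"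
    and c: "max 1 (C powr s) * (2 * K) powr (1 / p_minus p) \<le> c"
  shows "0 < cube_weight_norm p w a l \<and>
    modular p (\<lambda>x. indicator (cube a l) x * w x / (c * cube_weight_norm p w a l)) \<le> 1"
proof -
  define pm Q q where "pm = p_minus p" and "Q = cube a l" and "q = cube_exponent p a l"
  have pm: "0 < pm" using p by (simp add: P_log_with_def pm_def)
  have s0: "0 < s" using zero_less_mult_pos2[of s pm] s pm by (simp add: pm_def)
  have Q_sets: "Q \<in> sets lborel" unfolding Q_def by (rule cube_sets)
  have Q: "emeasure lborel Q < \<infinity>" "0 < measure lborel Q" "emeasure lborel Q \<noteq> 0"
    using l by (simp_all add: Q_def emeasure_cube measure_cube)
  have q: "pm \<le> q" "q \<le> p_plus p" "AE x in lborel. x \<in> Q \<longrightarrow> q \<le> p x"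
    using cube_exponent_bounds[OF p l] by (simp_all add: Q_def q_def pm_def)
  have int: "set_integrable lborel Q (\<lambda>x. w x powr e)" if "0 < e" "e \<le> p_plus p" for e
    unfolding Q_def using RH w(1) s0 l that by (rule RH_set_integrable_powr)
  have Iq: "0 < (\<integral>x\<in>Q. w x powr q \<partial>lborel)"
    using pm q by (intro set_integral_powr_pos[OF Q_sets Q(3) w(2) int]) auto
  have "s * pm \<le> s * q" using q(1) s0 by (intro mult_left_mono) auto
  with s have sq: "1 \<le> s * q" unfolding pm_def by linarith
  have "set_integrable lborel Q (\<lambda>x. (w x powr (1/s)) powr (s * p_plus p))"
    using int[of "p_plus p"] pm q s0 by (simp add: powr_powr)
  from reverse_Hoelder_mean_comparison[OF Q_sets Q(1,2) w(1) s0 this RH_cube[folded Q_def] C sq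
      P(1)[folded q_def] P(2)]
  have comparison: "(\<integral>x\<in>Q. w x powr P \<partial>lborel) / measure lborel Q
      \<le> (C powr s) powr P * ((\<integral>x\<in>Q. w x powr q \<partial>lborel) / measure lborel Q) powr (P / q)"
    by (simp add: powr_powr)
  have bounds: "AE x in lborel. x \<in> Q \<longrightarrow> 0 \<le> w x \<and> q \<le> p x \<and> p x \<le> P"
    using w(2) q(3) P(3) unfolding Q_def by eventually_elim auto
  have int_q: "set_integrable lborel Q (\<lambda>x. w x powr q)" using pm q by (intro int) auto
  have int_P: "set_integrable lborel Q (\<lambda>x. w x powr P)" using pm q P by (intro int) (auto simp: q_def)
  from Q_sets Q(2) bounds pm q(1) P(1)[folded q_def] int_q int_P Iq powr_ge_zero comparison
    K[folded Q_def q_def] c[folded pm_def]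
  have "modular p (\<lambda>x. indicator Q x * w x / (c * (\<integral>x\<in>Q. w x powr q \<partial>lborel) powr (1/q))) \<le> 1"
    by (rule modular_le_one_of_mean_comparison)
  moreover have "0 < (\<integral>x\<in>Q. w x powr q \<partial>lborel) powr (1/q)" using Iq by simp
  ultimately show ?thesis
    unfolding cube_weight_norm_def Q_def[symmetric] q_def[symmetric] by simp
qed

lemma modular_cube_upper:
  fixes p w :: "'a::euclidean_space \<Rightarrow> real"
  assumes p: "P_log_with p pinf" and s: "1 \<le> s * p_minus p"
    and w: "w \<in> borel_measurable lborel" "AE x in lborel. 0 < w x"
    and RH: "RH (s * p_plus p) (\<lambda>x. w x powr (1/s))"
  obtains c where "0 < c"
    and "\<And>a l. 0 < l \<Longrightarrow> 0 < cube_weight_norm p w a l \<and>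
           modular p (\<lambda>x. indicator (cube a l) x * w x / (c * cube_weight_norm p w a l)) \<le> 1"
proof -
  have pm: "0 < p_minus p" using p by (simp add: P_log_with_def)
  obtain D where D: "0 \<le> D" and gap: "\<And>a l. 0 < l \<Longrightarrow> \<exists>P. cube_exponent p a l \<le> P \<and> P \<le> p_plus p \<and>
      (AE x in lborel. x \<in> cube a l \<longrightarrow> p x \<le> P) \<and> (P - cube_exponent p a l) * - ln l \<le> D"
    using cube_exponent_gap[OF p] by blast
  obtain C where C: "0 < C" and RH_cube: "\<And>a l. 0 < l \<Longrightarrow>
      set_integrable lborel (cube a l) (\<lambda>x. (w x powr (1/s)) powr (s * p_plus p)) \<and>
      ((\<integral>x\<in>cube a l. (w x powr (1/s)) powr (s * p_plus p) \<partial>lborel) / measure lborel (cube a l))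
        powr (1 / (s * p_plus p)) \<le> C * ((\<integral>x\<in>cube a l. w x powr (1/s) \<partial>lborel) / measure lborel (cube a l))"
    using RH unfolding RH_def by blast
  define K where "K = exp (DIM('a) * D / p_minus p)"
  define c where "c = max 1 (C powr s) * (2 * K) powr (1 / p_minus p)"
  have K: "1 \<le> K" using D pm by (simp add: K_def)
  show ?thesis
  proof (rule that)
    show "0 < c" using K by (simp add: c_def)
    fix a :: 'a and l :: real assume l: "0 < l"
    obtain P where P: "cube_exponent p a l \<le> P" "P \<le> p_plus p"
      "AE x in lborel. x \<in> cube a l \<longrightarrow> p x \<le> P" "(P - cube_exponent p a l) * - ln l \<le> D"
      using gap[OF l] by blast
    have "measure lborel (cube a l) powr (1 - P / cube_exponent p a l) \<le> K"
      unfolding K_def using l pm p_minus_le_cube_exponent[OF p l] P(1) D P(4)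
      by (rule measure_cube_powr_le)
    from modular_cube_le_one[OF p s w RH l RH_cube[OF l, THEN conjunct2] less_imp_le[OF C] P(1-3) K this
        order_refl]
    show "0 < cube_weight_norm p w a l \<and>
        modular p (\<lambda>x. indicator (cube a l) x * w x / (c * cube_weight_norm p w a l)) \<le> 1"
      unfolding c_def .
  qed
qed

lemma set_integral_powr_p_minus_le:
  fixes p w :: "'a::euclidean_space \<Rightarrow> real" and Ci r :: real
  assumes p: "P_log_with p (p_minus p)"
    and Ci: "0 \<le> Ci" and decay: "\<forall>x. \<bar>p x - p_minus p\<bar> \<le> Ci / ln (exp 1 + norm x)"
    and w: "w \<in> borel_measurable lborel" "AE x in lborel. 0 < w x"
    and Q: "Q \<in> sets lborel" and r: "0 < r"
    and modular: "modular p (\<lambda>x. indicator Q x * w x / r) \<le> 1"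
  shows "(\<integral>x\<in>Q. w x powr p_minus p \<partial>lborel)
          \<le> r powr p_minus p * (exp (2 * DIM('a) * Ci / p_minus p) + pi ^ DIM('a))"
proof -
  define pm E where "pm = p_minus p" and "E = exp (2 * DIM('a) * Ci / pm)"
  have E: "0 \<le> E" by (simp add: E_def)
  have pm: "0 < pm" and [measurable]: "p \<in> borel_measurable lborel"
    using p by (simp_all add: P_log_with_def pm_def)
  have "AE x in lborel. x \<in> Q \<longrightarrow> w x powr pm \<le> r powr pm * (E * (\<bar>w x\<bar> / r) powr p x + cauchy_kernel x)"
    using w(2) P_log_with_AE_ge[OF p]
  proof eventually_elim
    case (elim x)
    have "p x - pm \<le> Ci / ln (exp 1 + norm x)" using decay by (auto simp: pm_def abs_le_iff)
    then have "(w x / r) powr pm \<le> E * (w x / r) powr p x + cauchy_kernel x"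
      unfolding E_def using elim r pm Ci by (intro powr_p_minus_le_decay) (auto simp: pm_def)
    moreover have "w x powr pm = r powr pm * (w x / r) powr pm"
      using elim r by (simp add: powr_divide)
    ultimately show ?case using elim r by (simp add: mult_left_mono)
  qed
  moreover have "(\<integral>\<^sup>+x\<in>Q. ennreal (cauchy_kernel x) \<partial>lborel) \<le> (\<integral>\<^sup>+x. ennreal (cauchy_kernel (x::'a)) \<partial>lborel)"
    by (rule nn_integral_mono) (simp split: split_indicator)
  then have "(\<integral>\<^sup>+x\<in>Q. ennreal (cauchy_kernel x) \<partial>lborel) \<le> ennreal (pi ^ DIM('a))"
    by (simp add: nn_integral_cauchy_kernel)
  ultimately show ?thesis
    using Q w(1) r modular cauchy_kernel_pos less_imp_le E
    unfolding pm_def[symmetric] E_def[symmetric]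
    by (intro set_integral_powr_le_of_modular) auto
qed

lemma set_integral_powr_le_of_small_measure:
  fixes p w :: "'a::euclidean_space \<Rightarrow> real" and q r :: real
  assumes Q: "Q \<in> sets lborel" "emeasure lborel Q \<le> 1"
    and [measurable]: "w \<in> borel_measurable lborel" "p \<in> borel_measurable lborel"
    and q: "0 \<le> q" and bounds: "AE x in lborel. x \<in> Q \<longrightarrow> 0 < w x \<and> q \<le> p x"
    and r: "0 < r" and modular: "modular p (\<lambda>x. indicator Q x * w x / r) \<le> 1"
  shows "(\<integral>x\<in>Q. w x powr q \<partial>lborel) \<le> r powr q * 2"
proof -
  have "AE x in lborel. x \<in> Q \<longrightarrow> w x powr q \<le> r powr q * (1 * (\<bar>w x\<bar> / r) powr p x + 1)"
    using bounds
  proof eventually_elim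
    case (elim x)
    show ?case
    proof
      assume "x \<in> Q"
      with elim r q have "(w x / r) powr q \<le> (w x / r) powr p x + 1"
        by (intro powr_le_powr_add_one) auto
      moreover have "w x powr q = r powr q * (w x / r) powr q"
        using elim \<open>x \<in> Q\<close> r by (simp add: powr_divide)
      ultimately show "w x powr q \<le> r powr q * (1 * (\<bar>w x\<bar> / r) powr p x + 1)"
        using elim \<open>x \<in> Q\<close> r by (simp add: mult_left_mono)
    qed
  qed
  moreover have "(\<integral>\<^sup>+x\<in>Q. ennreal 1 \<partial>lborel) \<le> ennreal 1"
    using Q by simp
  ultimately have "(\<integral>x\<in>Q. w x powr q \<partial>lborel) \<le> r powr q * (1 + 1)"
    using Q(1) r modular by (intro set_integral_powr_le_of_modular[where g = "\<lambda>_. 1"]) auto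
  then show ?thesis by simp
qed

lemma set_integral_cube_le_of_modular:
  fixes p w :: "'a::euclidean_space \<Rightarrow> real" and Ci l r :: real
  assumes p: "P_log_with p (p_minus p)"
    and Ci: "0 \<le> Ci" and decay: "\<forall>x. \<bar>p x - p_minus p\<bar> \<le> Ci / ln (exp 1 + norm x)"
    and w: "w \<in> borel_measurable lborel" "AE x in lborel. 0 < w x"
    and l: "0 < l" and r: "0 < r" and modular: "modular p (\<lambda>x. indicator (cube a l) x * w x / r) \<le> 1"
  shows "(\<integral>x\<in>cube a l. w x powr cube_exponent p a l \<partial>lborel)
          \<le> r powr cube_exponent p a l * (exp (2 * DIM('a) * Ci / p_minus p) + pi ^ DIM('a))"
proof (cases "1 < l")
  case True
  then show ?thesis
    using set_integral_powr_p_minus_le[OF p Ci decay w cube_sets r modular] by (simp add: cube_exponent_def)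
next
  case False
  define q where "q = cube_exponent p a l"
  have q: "p_minus p \<le> q" "AE x in lborel. x \<in> cube a l \<longrightarrow> q \<le> p x"
    using cube_exponent_bounds[OF p l] by (simp_all add: q_def)
  have "0 < p_minus p" and [measurable]: "p \<in> borel_measurable lborel"
    using p by (simp_all add: P_log_with_def)
  from False l have "emeasure lborel (cube a l) \<le> 1"
    by (simp add: emeasure_cube power_le_one)
  moreover have "AE x in lborel. x \<in> cube a l \<longrightarrow> 0 < w x \<and> q \<le> p x"
    using w(2) q(2) by eventually_elim auto
  ultimately have "(\<integral>x\<in>cube a l. w x powr q \<partial>lborel) \<le> r powr q * 2"
    using \<open>0 < p_minus p\<close> q(1) r modular
    by (intro set_integral_powr_le_of_small_measure[OF cube_sets _ w(1)]) auto
  also have "\<dots> \<le> r powr q * (exp (2 * DIM('a) * Ci / p_minus p) + pi ^ DIM('a))"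
  proof (intro mult_left_mono)
    have "1 \<le> exp (2 * DIM('a) * Ci / p_minus p)" using Ci \<open>0 < p_minus p\<close> by simp
    moreover have "1 \<le> pi ^ DIM('a)" using pi_gt3 by (intro one_le_power) simp
    ultimately show "2 \<le> exp (2 * DIM('a) * Ci / p_minus p) + pi ^ DIM('a)" by linarith
  qed simp
  finally show ?thesis by (simp add: q_def)
qed

lemma modular_cube_lower:
  fixes p w :: "'a::euclidean_space \<Rightarrow> real"
  assumes p: "P_log_with p (p_minus p)"
    and w: "w \<in> borel_measurable lborel" "AE x in lborel. 0 < w x"
  obtains c where "0 < c"
    and "\<And>a l r. 0 < l \<Longrightarrow> 0 < r \<Longrightarrow> modular p (\<lambda>x. indicator (cube a l) x * w x / r) \<le> 1 \<Longrightarrow>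
           c * cube_weight_norm p w a l \<le> r"
proof -
  define pm where "pm = p_minus p"
  have pm: "0 < pm" using p by (simp add: P_log_with_def pm_def)
  from p obtain Ci where Ci: "0 < Ci" and decay: "\<forall>x. \<bar>p x - p_minus p\<bar> \<le> Ci / ln (exp 1 + norm x)"
    unfolding P_log_with_def by blast
  define B where "B = exp (2 * DIM('a) * Ci / pm) + pi ^ DIM('a)"
  have B: "1 \<le> B" using Ci pm by (simp add: B_def add_increasing2)
  show ?thesis
  proof (rule that)
    show "0 < 1 / B powr (1 / pm)" using B by simp
    fix a :: 'a and l r :: real
    assume l: "0 < l" and r: "0 < r" and modular: "modular p (\<lambda>x. indicator (cube a l) x * w x / r) \<le> 1"
    define q where "q = cube_exponent p a l"
    have q: "pm \<le> q" using p_minus_le_cube_exponent[OF p l] by (simp add: q_def pm_def)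
    have "0 \<le> (\<integral>x\<in>cube a l. w x powr q \<partial>lborel)"
      unfolding set_lebesgue_integral_def by (intro integral_nonneg_AE AE_I2) auto
    with set_integral_cube_le_of_modular[OF p less_imp_le[OF Ci] decay w l r modular]
    have "cube_weight_norm p w a l \<le> (r powr q * B) powr (1 / q)"
      unfolding cube_weight_norm_def q_def[symmetric] using pm q by (intro powr_mono2) (auto simp: B_def pm_def)
    also have "\<dots> = r * B powr (1 / q)"
      using r B pm q by (simp add: powr_mult powr_powr)
    also have "\<dots> \<le> r * B powr (1 / pm)"
      using r B pm q by (intro mult_left_mono powr_mono divide_left_mono) auto
    finally show "1 / B powr (1 / pm) * cube_weight_norm p w a l \<le> r"
      using B by (simp add: field_simps)
  qed
qed

theorem corollary3p7:
  fixes p w :: "'a::euclidean_space \<Rightarrow> real" and s :: real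
  assumes "P_log_with p (p_minus p)"
    and "s > 1 / p_minus p"
    and "weight w"
    and "\<exists>C \<gamma>::real. AE x in lborel. w x \<le> C * (1 + norm x) powr \<gamma>"
    and "RH (s * p_plus p) (\<lambda>x. w x powr (1/s))"
  shows "\<exists>c1>0. \<exists>c2>0. \<forall>a l. l > 0 \<longrightarrow>
     (let q = (if l > 1 then p_minus p else ess_inf_on p (cube a l));
          A = (\<integral>x\<in>cube a l. w x powr q \<partial>lborel) powr (1/q)
      in c1 * A \<le> lp_w_norm p w (indicator (cube a l)) \<and>
         lp_w_norm p w (indicator (cube a l)) \<le> c2 * A)"
proof -
  have w: "w \<in> borel_measurable lborel" "AE x in lborel. 0 < w x"
    using assms(3) unfolding weight_def by auto
  have "0 < p_minus p" using assms(1) by (simp add: P_log_with_def)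
  with assms(2) have s: "1 \<le> s * p_minus p" by (simp add: field_simps)
  obtain c2 where c2: "0 < c2" and upper: "\<And>a l. 0 < l \<Longrightarrow> 0 < cube_weight_norm p w a l \<and>
      modular p (\<lambda>x. indicator (cube a l) x * w x / (c2 * cube_weight_norm p w a l)) \<le> 1"
    using modular_cube_upper[OF assms(1) s w assms(5)] by blast
  obtain c1 where c1: "0 < c1" and lower: "\<And>a l r. 0 < l \<Longrightarrow> 0 < r \<Longrightarrow>
      modular p (\<lambda>x. indicator (cube a l) x * w x / r) \<le> 1 \<Longrightarrow> c1 * cube_weight_norm p w a l \<le> r"
    using modular_cube_lower[OF assms(1) w] by blast
  have "c1 * cube_weight_norm p w a l \<le> lp_w_norm p w (indicator (cube a l)) \<and>
        lp_w_norm p w (indicator (cube a l)) \<le> c2 * cube_weight_norm p w a l" if l: "0 < l" for a l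
  proof -
    from upper[OF l] c2 have r: "0 < c2 * cube_weight_norm p w a l"
      and modular: "modular p (\<lambda>x. indicator (cube a l) x * w x / (c2 * cube_weight_norm p w a l)) \<le> 1"
      by simp_all
    show ?thesis
      unfolding lp_w_norm_def using lp_norm_le[OF r modular] le_lp_norm[OF r modular lower[OF l]] by simp
  qed
  then show ?thesis
    using c1 c2 unfolding Let_def cube_weight_norm_def cube_exponent_def by blast
qed

end
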